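(* Let $p\in(0,1)$ and let $\mu\ge1$ be an integer. Let $X_1,X_2,\dots$ be i.i.d. Bernoulli random variables with $\Pr[X_t=1]=p$. Define sets $M,N\subseteq\mathbb{N}$ by the following process: starting from $t=1$, put $t$ into $M$ if $X_t=1$ and into $N$ if $X_t=0$; the process terminates immediately after $|M|=\mu$. For each $t\ge1$ let $w_t=w_t(X_1,\dots,X_{t-1})\ge0$ be a non-negative function of the first $t-1$ variables ($w_1$ a constant), with $w_t=0$ whenever the process terminated before time $t$, and for $T\subseteq\mathbb{N}$ set $w(T)=\sum_{t\in T}w_t(X_1,\dots,X_{t-1})$. Then $$\mathbb{E}[w(M)]=\frac{p}{1-p}\,\mathbb{E}[w(N)].$$ *)

theory Defs
  imports "HOL-Probability.Probability"
begin

text \<open>The i.i.d. Bernoulli(p) sequence: omega t = X_t (index 0 is unused).\<close>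
definition bern_seq :: "real \<Rightarrow> (nat \<Rightarrow> bool) measure" where
  "bern_seq p = PiM UNIV (\<lambda>_::nat. measure_pmf (bernoulli_pmf p))"

definition active :: "nat \<Rightarrow> (nat \<Rightarrow> bool) \<Rightarrow> nat \<Rightarrow> bool" where
  "active \<mu> \<omega> t \<longleftrightarrow> card {s \<in> {1..<t}. \<omega> s} < \<mu>"

definition M_set :: "nat \<Rightarrow> (nat \<Rightarrow> bool) \<Rightarrow> nat set" where
  "M_set \<mu> \<omega> = {t. 1 \<le> t \<and> active \<mu> \<omega> t \<and> \<omega> t}"

definition N_set :: "nat \<Rightarrow> (nat \<Rightarrow> bool) \<Rightarrow> nat set" where
  "N_set \<mu> \<omega> = {t. 1 \<le> t \<and> active \<mu> \<omega> t \<and> \<not> \<omega> t}"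

definition wsum :: "(nat \<Rightarrow> bool list \<Rightarrow> real) \<Rightarrow> (nat \<Rightarrow> bool) \<Rightarrow> nat set \<Rightarrow> ennreal" where
  "wsum w \<omega> T = (\<Sum>t. ennreal (w t (map \<omega> [1..<t])) * indicator T t)"

end

theory Submission imports Defs begin

text \<open>The weight w_t depends only on X_1, ..., X_(t-1), while X_t is an independent
  Bernoulli(p) coin; since w_t vanishes once the process has stopped, time t contributes
  exactly E[w_t] p to E[w(M)] and E[w_t] (1 - p) to E[w(N)]. Summing over t (monotone
  convergence) gives E[w(M)] = S p and E[w(N)] = S (1 - p) with the same S.\<close>

lemma nn_integral_PiM_mult_coordinate:
  fixes f :: "('i \<Rightarrow> 'a) \<Rightarrow> ennreal" and g :: "'a \<Rightarrow> ennreal"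
  assumes M: "\<And>i. i \<in> I \<Longrightarrow> prob_space (M i)" and t: "t \<in> I"
    and f: "f \<in> borel_measurable (PiM I M)" and g: "g \<in> borel_measurable (M t)"
    and f_indep: "\<And>\<omega> x. f (fun_upd \<omega> t x) = f \<omega>"
  shows "(\<integral>\<^sup>+\<omega>. f \<omega> * g (\<omega> t) \<partial>PiM I M) = (\<integral>\<^sup>+\<omega>. f \<omega> \<partial>PiM I M) * (\<integral>\<^sup>+x. g x \<partial>M t)"
proof -
  define Q where "Q = PiM (I - {t}) M"
  interpret Mt: prob_space "M t" using M t .
  interpret Q: prob_space Q unfolding Q_def by (intro prob_space_PiM) (simp add: M)
  interpret MtQ: pair_sigma_finite "M t" Q by unfold_locales
  have I: "insert t (I - {t}) = I" using t by auto
  have upd: "(\<lambda>(x, X). fun_upd X t x) \<in> measurable (M t \<Otimes>\<^sub>M Q) (PiM I M)"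
    using measurable_fun_upd[of I "I - {t}" t "snd" "M t \<Otimes>\<^sub>M Q" M "fst"] t
    unfolding Q_def by (simp add: case_prod_unfold insert_absorb)
  have distr_upd: "distr (M t \<Otimes>\<^sub>M Q) (PiM I M) (\<lambda>(x, X). fun_upd X t x) = PiM I M"
    using distr_pair_PiM_eq_PiM[of "I - {t}" M t] M t unfolding Q_def I by simp
  have Fubini: "(\<integral>\<^sup>+\<omega>. F \<omega> \<partial>PiM I M) = (\<integral>\<^sup>+x. \<integral>\<^sup>+X. F (fun_upd X t x) \<partial>Q \<partial>M t)"
    if F: "F \<in> borel_measurable (PiM I M)" for F
  proof -
    have "(\<integral>\<^sup>+\<omega>. F \<omega> \<partial>PiM I M)
        = (\<integral>\<^sup>+\<omega>. F \<omega> \<partial>distr (M t \<Otimes>\<^sub>M Q) (PiM I M) (\<lambda>(x, X). fun_upd X t x))"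
      by (simp add: distr_upd)
    also have "\<dots> = (\<integral>\<^sup>+z. F (case z of (x, X) \<Rightarrow> fun_upd X t x) \<partial>(M t \<Otimes>\<^sub>M Q))"
      using F by (intro nn_integral_distr[OF upd]) simp
    also have "\<dots> = (\<integral>\<^sup>+x. \<integral>\<^sup>+X. F (fun_upd X t x) \<partial>Q \<partial>M t)"
      by (subst Q.nn_integral_fst[symmetric]) (use measurable_comp[OF upd F] in \<open>simp_all add: comp_def\<close>)
    finally show ?thesis .
  qed
  have fQ: "f \<in> borel_measurable Q"
  proof -
    obtain x where "x \<in> space (M t)" using Mt.not_empty by blast
    then have "(\<lambda>X. fun_upd X t x) \<in> measurable Q (PiM I M)"
      using measurable_fun_upd[of I "I - {t}" t "\<lambda>X. X" Q M "\<lambda>_. x"] t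
      unfolding Q_def by auto
    from measurable_comp[OF this f] show ?thesis by (simp add: comp_def f_indep)
  qed
  have fg: "(\<lambda>\<omega>. f \<omega> * g (\<omega> t)) \<in> borel_measurable (PiM I M)"
    using f measurable_comp[OF measurable_component_singleton[OF t, of M] g]
    by (intro borel_measurable_times_ennreal) (simp_all add: comp_def)
  have "(\<integral>\<^sup>+\<omega>. f \<omega> * g (\<omega> t) \<partial>PiM I M) = (\<integral>\<^sup>+x. (\<integral>\<^sup>+X. f X \<partial>Q) * g x \<partial>M t)"
    by (simp add: Fubini[OF fg] f_indep nn_integral_multc fQ)
  also have "\<dots> = (\<integral>\<^sup>+X. f X \<partial>Q) * (\<integral>\<^sup>+x. g x \<partial>M t)"
    by (simp add: nn_integral_cmult g)
  also have "(\<integral>\<^sup>+X. f X \<partial>Q) = (\<integral>\<^sup>+\<omega>. f \<omega> \<partial>PiM I M)"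
    by (simp add: Fubini[OF f] f_indep Mt.emeasure_space_1)
  finally show ?thesis .
qed

lemma measurable_bern_seq_coordinate:
  "(\<lambda>\<omega>. \<omega> t) \<in> measurable (bern_seq p) (count_space UNIV)"
proof -
  have "(\<lambda>\<omega>. \<omega> t) \<in> measurable (bern_seq p) (measure_pmf (bernoulli_pmf p))"
    unfolding bern_seq_def by (rule measurable_component_singleton) simp
  then show ?thesis by (simp cong: measurable_cong_sets)
qed

lemma measurable_bern_seq_map:
  "(\<lambda>\<omega>. map \<omega> ns) \<in> measurable (bern_seq p) (count_space UNIV)"
proof (induction ns)
  case (Cons n ns)
  have "(\<lambda>\<omega>. \<omega> n # map \<omega> ns) \<in> measurable (bern_seq p) (count_space UNIV)"
  proof (rule measurable_compose_countable[where f="\<lambda>xs \<omega>. \<omega> n # xs", OF _ Cons.IH])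
    fix xs :: "bool list"
    show "(\<lambda>\<omega>. \<omega> n # xs) \<in> measurable (bern_seq p) (count_space UNIV)"
      by (rule measurable_compose[OF measurable_bern_seq_coordinate measurable_count_space])
  qed
  then show ?case by simp
qed simp

lemma nn_integral_bern_seq_mult_indicator:
  fixes F :: "bool list \<Rightarrow> ennreal"
  assumes "0 \<le> p" "p \<le> 1"
  shows "(\<integral>\<^sup>+\<omega>. F (map \<omega> [1..<t]) * indicator {b} (\<omega> t) \<partial>bern_seq p)
       = (\<integral>\<^sup>+\<omega>. F (map \<omega> [1..<t]) \<partial>bern_seq p) * pmf (bernoulli_pmf p) b"
proof -
  have "map (fun_upd \<omega> t x) [1..<t] = map \<omega> [1..<t]" for \<omega> x by simp
  moreover have "(\<lambda>\<omega>. F (map \<omega> [1..<t])) \<in> borel_measurable (bern_seq p)"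
    by (rule measurable_compose[OF measurable_bern_seq_map]) simp
  ultimately show ?thesis
    unfolding bern_seq_def
    by (subst nn_integral_PiM_mult_coordinate) (auto simp: prob_space_measure_pmf emeasure_pmf_single)
qed

lemma wsum_active_eq_suminf:
  assumes "\<And>t. \<not> active \<mu> \<omega> t \<Longrightarrow> w t (map \<omega> [1..<t]) = 0"
  shows "wsum w \<omega> {t. 1 \<le> t \<and> active \<mu> \<omega> t \<and> \<omega> t = b}
       = (\<Sum>t. of_bool (1 \<le> t) * ennreal (w t (map \<omega> [1..<t])) * indicator {b} (\<omega> t))"
  unfolding wsum_def
proof (intro arg_cong[where f=suminf] ext)
  fix t
  show "ennreal (w t (map \<omega> [1..<t])) * indicator {t. 1 \<le> t \<and> active \<mu> \<omega> t \<and> \<omega> t = b} t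
      = of_bool (1 \<le> t) * ennreal (w t (map \<omega> [1..<t])) * indicator {b} (\<omega> t)"
    using assms[of t] by (cases "active \<mu> \<omega> t") (auto simp: indicator_def)
qed

lemma nn_integral_wsum_active:
  assumes "0 \<le> p" "p \<le> 1"
    and "\<And>t \<omega>. \<not> active \<mu> \<omega> t \<Longrightarrow> w t (map \<omega> [1..<t]) = 0"
  shows "(\<integral>\<^sup>+\<omega>. wsum w \<omega> {t. 1 \<le> t \<and> active \<mu> \<omega> t \<and> \<omega> t = b} \<partial>bern_seq p)
       = (\<Sum>t. \<integral>\<^sup>+\<omega>. of_bool (1 \<le> t) * ennreal (w t (map \<omega> [1..<t])) \<partial>bern_seq p)
         * pmf (bernoulli_pmf p) b"
proof -
  have term_measurable: "(\<lambda>\<omega>. of_bool (1 \<le> t) * ennreal (w t (map \<omega> [1..<t])) * indicator {b} (\<omega> t))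
      \<in> borel_measurable (bern_seq p)" for t
    by (intro borel_measurable_times_ennreal borel_measurable_const
        measurable_compose[OF measurable_bern_seq_map, of "\<lambda>xs. ennreal (w t xs)"]
        measurable_compose[OF measurable_bern_seq_coordinate, of "indicator {b}"]) simp_all
  have term_integral: "(\<integral>\<^sup>+\<omega>. of_bool (1 \<le> t) * ennreal (w t (map \<omega> [1..<t])) * indicator {b} (\<omega> t) \<partial>bern_seq p)
      = (\<integral>\<^sup>+\<omega>. of_bool (1 \<le> t) * ennreal (w t (map \<omega> [1..<t])) \<partial>bern_seq p) * pmf (bernoulli_pmf p) b"
    for t
    by (rule nn_integral_bern_seq_mult_indicator[OF assms(1,2)])
  have "(\<integral>\<^sup>+\<omega>. wsum w \<omega> {t. 1 \<le> t \<and> active \<mu> \<omega> t \<and> \<omega> t = b} \<partial>bern_seq p)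
      = (\<integral>\<^sup>+\<omega>. (\<Sum>t. of_bool (1 \<le> t) * ennreal (w t (map \<omega> [1..<t])) * indicator {b} (\<omega> t)) \<partial>bern_seq p)"
    by (intro nn_integral_cong wsum_active_eq_suminf assms(3))
  also have "\<dots> = (\<Sum>t. \<integral>\<^sup>+\<omega>. of_bool (1 \<le> t) * ennreal (w t (map \<omega> [1..<t])) * indicator {b} (\<omega> t) \<partial>bern_seq p)"
    by (rule nn_integral_suminf[OF term_measurable])
  finally show ?thesis
    by (simp only: term_integral ennreal_suminf_multc)
qed

theorem proposition1:
  fixes p :: real and \<mu> :: nat and w :: "nat \<Rightarrow> bool list \<Rightarrow> real"
  assumes "0 < p" and "p < 1" and "1 \<le> \<mu>"
    and "\<And>t xs. w t xs \<ge> 0"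
    and "\<And>t \<omega>. \<not> active \<mu> \<omega> t \<Longrightarrow> w t (map \<omega> [1..<t]) = 0"
  shows "(\<integral>\<^sup>+ \<omega>. wsum w \<omega> (M_set \<mu> \<omega>) \<partial>bern_seq p)
       = ennreal (p / (1 - p)) * (\<integral>\<^sup>+ \<omega>. wsum w \<omega> (N_set \<mu> \<omega>) \<partial>bern_seq p)"
proof -
  define S where "S = (\<Sum>t. \<integral>\<^sup>+\<omega>. of_bool (1 \<le> t) * ennreal (w t (map \<omega> [1..<t])) \<partial>bern_seq p)"
  have "M_set \<mu> \<omega> = {t. 1 \<le> t \<and> active \<mu> \<omega> t \<and> \<omega> t = True}"
    and "N_set \<mu> \<omega> = {t. 1 \<le> t \<and> active \<mu> \<omega> t \<and> \<omega> t = False}" for \<omega>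
    by (auto simp: M_set_def N_set_def)
  then have "(\<integral>\<^sup>+ \<omega>. wsum w \<omega> (M_set \<mu> \<omega>) \<partial>bern_seq p) = S * ennreal p"
    and "(\<integral>\<^sup>+ \<omega>. wsum w \<omega> (N_set \<mu> \<omega>) \<partial>bern_seq p) = S * ennreal (1 - p)"
    using nn_integral_wsum_active[of p \<mu> w True] nn_integral_wsum_active[of p \<mu> w False] assms(1,2,5)
    unfolding S_def by simp_all
  moreover have "ennreal (p / (1 - p)) * ennreal (1 - p) = ennreal p"
    using assms(1,2) by (simp add: ennreal_mult[symmetric])
  ultimately show ?thesis by (simp add: ac_simps)
qed

end
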